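(* Let $\mathbf{X}=\{\mathbf{x}\in\mathbb{R}^n:g_1(\mathbf{x})\ge0,\dots,g_m(\mathbf{x})\ge0\}$ be compact, with $g_j\in\mathbb{R}[\mathbf{x}]$, and let $p_1,\dots,p_t,q_1,\dots,q_t\in\mathbb{R}[\mathbf{x}]$ with each $q_i$ positive on $\mathbf{X}$. Let $f_{\min}=\inf_{\mathbf{x}\in\mathbf{X}}\sum_{i=1}^t p_i(\mathbf{x})/q_i(\mathbf{x})$ and $$f_{\mathrm{meas}}=\inf_{\mu_1,\dots,\mu_t\in\mathscr{M}_+(\mathbf{X})}\Big\{\sum_{i=1}^t\int_{\mathbf{X}}p_i\,\mathrm{d}\mu_i:\ \int_{\mathbf{X}}\mathbf{x}^{\alpha}q_i\,\mathrm{d}\mu_i=\int_{\mathbf{X}}\mathbf{x}^{\alpha}q_1\,\mathrm{d}\mu_1\ \ (\alpha\in\mathbb{N}^n,\ i=2,\dots,t),\ \int_{\mathbf{X}}q_1\,\mathrm{d}\mu_1=1\Big\}.$$ Then $f_{\mathrm{meas}}=f_{\min}$.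
   Context: $\mathscr{M}_+(\mathbf{X})$ denotes the cone of finite nonnegative Borel measures supported on $\mathbf{X}$; $\mathbf{x}^\alpha=x_1^{\alpha_1}\cdots x_n^{\alpha_n}$. *)

theory Defs
  imports "HOL-Analysis.Analysis"
begin

definition monomial :: "('n::finite \<Rightarrow> nat) \<Rightarrow> real^'n \<Rightarrow> real" where
  "monomial \<alpha> x = (\<Prod>i\<in>UNIV. (x $ i) ^ (\<alpha> i))"

definition is_poly :: "(real^'n::finite \<Rightarrow> real) \<Rightarrow> bool" where
  "is_poly f \<longleftrightarrow> (\<exists>A c. finite A \<and> f = (\<lambda>x. \<Sum>\<alpha>\<in>A. c \<alpha> * monomial \<alpha> x))"

definition meas_on :: "(real^'n::finite) set \<Rightarrow> (real^'n) measure \<Rightarrow> bool" where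
  "meas_on X \<mu> \<longleftrightarrow> sets \<mu> = sets borel \<and> finite_measure \<mu> \<and> emeasure \<mu> (space \<mu> - X) = 0"

end

theory Submission
  imports Defs "HOL-Probability.Giry_Monad"
begin

text \<open>
  The continuous function \<open>F = (\<Sum>i. p\<^sub>i / q\<^sub>i)\<close> attains its minimum on the compact set
  \<open>X\<close> at some \<open>x\<^sub>0\<close>, and the point masses at \<open>x\<^sub>0\<close> of weights \<open>1 / q\<^sub>i(x\<^sub>0)\<close> are feasible with value
  \<open>F(x\<^sub>0)\<close>. Conversely, if \<open>\<mu>\<^sub>1, \<dots>, \<mu>\<^sub>t\<close> are feasible, the positive functionals
  \<open>h \<mapsto> \<integral>\<^sub>X h q\<^sub>i d\<mu>\<^sub>i\<close> agree on all monomials; as polynomials are uniformly dense in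
  \<open>C(X)\<close> (Stone-Weierstrass), they agree on every continuous function, in particular on
  \<open>p\<^sub>i / q\<^sub>i\<close>. Hence \<open>\<Sum>\<^sub>i \<integral> p\<^sub>i d\<mu>\<^sub>i = \<integral> F q\<^sub>1 d\<mu>\<^sub>1 \<ge> F(x\<^sub>0) \<integral> q\<^sub>1 d\<mu>\<^sub>1 = F(x\<^sub>0)\<close>.
\<close>

lemma monomial_continuous_on: "continuous_on S (monomial \<alpha>)"
  unfolding monomial_def[abs_def] by (intro continuous_intros)

lemma monomial_zero: "monomial (\<lambda>_. 0) = (\<lambda>_. 1)"
  by (simp add: monomial_def[abs_def])

lemma monomial_add: "monomial (\<lambda>i. \<alpha> i + \<beta> i) x = monomial \<alpha> x * monomial \<beta> x"
  by (simp add: monomial_def power_add prod.distrib)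

lemma monomial_coordinate: "monomial (\<lambda>i. if i = j then 1 else 0) x = x $ j"
proof -
  have "monomial (\<lambda>i. if i = j then 1 else 0) x = (\<Prod>i\<in>UNIV. if i = j then x $ i else 1)"
    unfolding monomial_def by (intro prod.cong) auto
  then show ?thesis by simp
qed

lemma is_poly_continuous_on: "is_poly f \<Longrightarrow> continuous_on S f"
  unfolding is_poly_def by (auto intro!: continuous_intros monomial_continuous_on)

lemma is_poly_scaled_monomial: "is_poly (\<lambda>x. c * monomial \<alpha> x)"
  unfolding is_poly_def by (intro exI[of _ "{\<alpha>}"] exI[of _ "\<lambda>_. c"]) simp

lemma is_poly_const: "is_poly (\<lambda>_. c)"
  using is_poly_scaled_monomial[of c "\<lambda>_. 0"] by (simp add: monomial_zero)

lemma is_poly_coordinate: "is_poly (\<lambda>x. x $ j)"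
  using is_poly_scaled_monomial[of 1 "\<lambda>i. if i = j then 1 else 0"] by (simp add: monomial_coordinate)

lemma is_poly_add:
  assumes "is_poly f" "is_poly g"
  shows "is_poly (\<lambda>x. f x + g x)"
proof -
  obtain A a B b where A: "finite A" and f: "f = (\<lambda>x. \<Sum>\<alpha>\<in>A. a \<alpha> * monomial \<alpha> x)"
    and B: "finite B" and g: "g = (\<lambda>x. \<Sum>\<alpha>\<in>B. b \<alpha> * monomial \<alpha> x)"
    using assms unfolding is_poly_def by blast
  have extend: "(\<Sum>\<alpha>\<in>C. c \<alpha> * monomial \<alpha> x)
      = (\<Sum>\<alpha>\<in>A \<union> B. (if \<alpha> \<in> C then c \<alpha> else 0) * monomial \<alpha> x)"
    if "C \<subseteq> A \<union> B" for C c x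
    by (rule sum.mono_neutral_cong_right[symmetric]) (use that A B in auto)
  define c where "c \<alpha> = (if \<alpha> \<in> A then a \<alpha> else 0) + (if \<alpha> \<in> B then b \<alpha> else 0)" for \<alpha>
  have "(\<lambda>x. f x + g x) = (\<lambda>x. \<Sum>\<alpha>\<in>A \<union> B. c \<alpha> * monomial \<alpha> x)"
    unfolding f g c_def extend[of A, OF Un_upper1] extend[of B, OF Un_upper2] distrib_right sum.distrib ..
  then show ?thesis
    unfolding is_poly_def using A B by (intro exI[of _ "A \<union> B"] exI[of _ c]) simp
qed

lemma is_poly_sum:
  assumes "finite I" "\<And>i. i \<in> I \<Longrightarrow> is_poly (f i)"
  shows "is_poly (\<lambda>x. \<Sum>i\<in>I. f i x)"
  using assms
proof (induction I rule: finite_induct)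
  case empty
  then show ?case by (simp add: is_poly_const)
next
  case (insert i I)
  then have "is_poly (\<lambda>x. f i x + (\<Sum>i\<in>I. f i x))"
    by (intro is_poly_add) auto
  with insert.hyps show ?case by simp
qed

lemma is_poly_mult:
  assumes "is_poly f" "is_poly g"
  shows "is_poly (\<lambda>x. f x * g x)"
proof -
  obtain A a B b where A: "finite A" and f: "f = (\<lambda>x. \<Sum>\<alpha>\<in>A. a \<alpha> * monomial \<alpha> x)"
    and B: "finite B" and g: "g = (\<lambda>x. \<Sum>\<alpha>\<in>B. b \<alpha> * monomial \<alpha> x)"
    using assms unfolding is_poly_def by blast
  have "f x * g x = (\<Sum>\<alpha>\<in>A. \<Sum>\<beta>\<in>B. (a \<alpha> * b \<beta>) * monomial (\<lambda>i. \<alpha> i + \<beta> i) x)" for x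
    unfolding f g monomial_add sum_product by (simp add: ac_simps)
  then show ?thesis
    using A B by (simp add: is_poly_sum is_poly_scaled_monomial)
qed

lemma is_poly_dense:
  fixes f :: "real^'n::finite \<Rightarrow> real"
  assumes "compact X" "continuous_on X f" "0 < e"
  obtains g where "is_poly g" "\<And>x. x \<in> X \<Longrightarrow> \<bar>f x - g x\<bar> < e"
proof -
  interpret function_ring_on "Collect is_poly" X
  proof
    fix f g :: "real^'n \<Rightarrow> real" and c :: real and x y :: "real^'n"
    show "compact X" by fact
    show "f \<in> Collect is_poly \<Longrightarrow> continuous_on X f"
      by (simp add: is_poly_continuous_on)
    show "f \<in> Collect is_poly \<Longrightarrow> g \<in> Collect is_poly \<Longrightarrow> (\<lambda>x. f x + g x) \<in> Collect is_poly"
      by (simp add: is_poly_add)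
    show "f \<in> Collect is_poly \<Longrightarrow> g \<in> Collect is_poly \<Longrightarrow> (\<lambda>x. f x * g x) \<in> Collect is_poly"
      by (simp add: is_poly_mult)
    show "(\<lambda>_. c) \<in> Collect is_poly"
      by (simp add: is_poly_const)
    assume "x \<noteq> y"
    then obtain j where "x $ j \<noteq> y $ j" by (auto simp: vec_eq_iff)
    moreover have "(\<lambda>v. v $ j) \<in> Collect is_poly"
      by (simp add: is_poly_coordinate)
    ultimately show "\<exists>f\<in>Collect is_poly. f x \<noteq> f y"
      by (rule rev_bexI[rotated])
  qed
  obtain g where "is_poly g" "\<forall>x\<in>X. \<bar>f x - g x\<bar> < e"
    using Stone_Weierstrass_basic[OF assms(2,3)] by auto
  then show ?thesis
    by (intro that) auto
qed

section \<open>Positive linear functionals are determined by their moments\<close>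

locale positive_linear_functional =
  fixes X :: "'a::topological_space set" and L :: "('a \<Rightarrow> real) \<Rightarrow> real"
  assumes add: "continuous_on X f \<Longrightarrow> continuous_on X g \<Longrightarrow> L (\<lambda>x. f x + g x) = L f + L g"
    and scale: "continuous_on X f \<Longrightarrow> L (\<lambda>x. c * f x) = c * L f"
    and mono: "continuous_on X f \<Longrightarrow> continuous_on X g \<Longrightarrow> (\<And>x. x \<in> X \<Longrightarrow> f x \<le> g x)
      \<Longrightarrow> L f \<le> L g"
begin

lemma zero: "L (\<lambda>_. 0) = 0"
  using scale[of "\<lambda>_. 0" 0] by simp

lemma const: "L (\<lambda>_. c) = c * L (\<lambda>_. 1)"
  using scale[of "\<lambda>_. 1" c] by simp

lemma one_nonneg: "0 \<le> L (\<lambda>_. 1)"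
  using mono[of "\<lambda>_. 0" "\<lambda>_. 1"] by (simp add: zero)

lemma sum:
  assumes "finite I" "\<And>i. i \<in> I \<Longrightarrow> continuous_on X (f i)"
  shows "L (\<lambda>x. \<Sum>i\<in>I. f i x) = (\<Sum>i\<in>I. L (f i))"
  using assms
proof (induction I rule: finite_induct)
  case empty
  then show ?case by (simp add: zero)
next
  case (insert i I)
  then have "L (\<lambda>x. f i x + (\<Sum>i\<in>I. f i x)) = L (f i) + L (\<lambda>x. \<Sum>i\<in>I. f i x)"
    by (intro add) (auto intro!: continuous_on_sum)
  with insert show ?case by simp
qed

end

lemma positive_linear_functional_poly_eq:
  fixes L1 L2 :: "(real^'n::finite \<Rightarrow> real) \<Rightarrow> real"
  assumes "positive_linear_functional X L1" "positive_linear_functional X L2"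
    and moments: "\<And>\<alpha>. L1 (monomial \<alpha>) = L2 (monomial \<alpha>)" and "is_poly g"
  shows "L1 g = L2 g"
proof -
  obtain A c where A: "finite A" and g: "g = (\<lambda>x. \<Sum>\<alpha>\<in>A. c \<alpha> * monomial \<alpha> x)"
    using \<open>is_poly g\<close> unfolding is_poly_def by blast
  have expand: "L g = (\<Sum>\<alpha>\<in>A. c \<alpha> * L (monomial \<alpha>))" if "positive_linear_functional X L" for L
  proof -
    interpret positive_linear_functional X L by fact
    show ?thesis
      unfolding g using A
      by (simp add: sum scale monomial_continuous_on continuous_on_mult_left)
  qed
  show ?thesis
    using expand[OF assms(1)] expand[OF assms(2)] moments by simp
qed

lemma positive_linear_functional_le_of_poly_eq:
  fixes L1 L2 :: "(real^'n::finite \<Rightarrow> real) \<Rightarrow> real"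
  assumes X: "compact X" and L1: "positive_linear_functional X L1"
    and L2: "positive_linear_functional X L2"
    and poly_eq: "\<And>g. is_poly g \<Longrightarrow> L1 g = L2 g" and h: "continuous_on X h"
  shows "L1 h \<le> L2 h"
proof (rule field_le_epsilon)
  interpret L1: positive_linear_functional X L1 by fact
  interpret L2: positive_linear_functional X L2 by fact
  fix d :: real assume "0 < d"
  define C where "C = L1 (\<lambda>_. 1)"
  have C: "0 \<le> C" "L2 (\<lambda>_. 1) = C"
    using L1.one_nonneg poly_eq[OF is_poly_const] by (simp_all add: C_def)
  define e where "e = d / (2 * C + 1)"
  have e: "0 < e" "2 * e * C \<le> d"
    using \<open>0 < d\<close> C by (simp_all add: e_def field_simps)
  obtain g where g: "is_poly g" and close: "\<And>x. x \<in> X \<Longrightarrow> \<bar>h x - g x\<bar> < e"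
    using is_poly_dense[OF X h \<open>0 < e\<close>] by blast
  have gc: "continuous_on X g"
    using g by (rule is_poly_continuous_on)
  then have shifted: "continuous_on X (\<lambda>x. g x + c)" for c
    by (intro continuous_on_add continuous_on_const)
  have sandwich: "g x + (- e) \<le> h x" "h x \<le> g x + e" if "x \<in> X" for x
    using close[OF that] by (simp_all add: abs_diff_less_iff)
  have "L1 h \<le> L1 (\<lambda>x. g x + e)"
    by (rule L1.mono[OF h shifted sandwich(2)])
  also have "\<dots> = L2 g + e * C"
    by (simp only: L1.add[OF gc continuous_on_const] L1.const[of e] poly_eq[OF g] C_def)
  also have "\<dots> = L2 (\<lambda>x. g x + (- e)) + 2 * e * C"
    using L2.add[OF gc continuous_on_const, of "- e"] L2.const[of "- e"] C(2) by simp
  also have "L2 (\<lambda>x. g x + (- e)) \<le> L2 h"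
    by (rule L2.mono[OF shifted h sandwich(1)])
  finally show "L1 h \<le> L2 h + d"
    using e by linarith
qed

lemma positive_linear_functional_eq_of_moments:
  fixes L1 L2 :: "(real^'n::finite \<Rightarrow> real) \<Rightarrow> real"
  assumes "compact X" "positive_linear_functional X L1" "positive_linear_functional X L2"
    and "\<And>\<alpha>. L1 (monomial \<alpha>) = L2 (monomial \<alpha>)" and "continuous_on X h"
  shows "L1 h = L2 h"
proof -
  have poly_eq: "L1 g = L2 g" if "is_poly g" for g
    by (rule positive_linear_functional_poly_eq[OF assms(2-4) that])
  show ?thesis
  proof (rule antisym)
    show "L1 h \<le> L2 h"
      by (rule positive_linear_functional_le_of_poly_eq[OF assms(1-3) poly_eq assms(5)])
    show "L2 h \<le> L1 h"
      by (rule positive_linear_functional_le_of_poly_eq[OF assms(1,3,2) poly_eq[symmetric] assms(5)])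
  qed
qed

lemma set_integrable_continuous_on:
  fixes h :: "real^'n::finite \<Rightarrow> real"
  assumes M: "meas_on X M" and X: "compact X" and h: "continuous_on X h"
  shows "set_integrable M X h"
proof -
  interpret finite_measure M
    using M by (simp add: meas_on_def)
  have "(\<lambda>x. indicator X x *\<^sub>R h x) \<in> borel_measurable borel"
    using X h by (intro borel_measurable_continuous_on_indicator) (simp_all add: borel_compact)
  then have measurable: "(\<lambda>x. indicator X x *\<^sub>R h x) \<in> borel_measurable M"
    using M measurable_cong_sets unfolding meas_on_def by blast
  obtain B where "\<forall>y\<in>h ` X. norm y \<le> B"
    using compact_imp_bounded[OF compact_continuous_image[OF h X]] unfolding bounded_iff by blast
  then have "AE x in M. norm (indicator X x *\<^sub>R h x) \<le> max B 0"
    by (intro AE_I2) (auto simp: indicator_def)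
  then show ?thesis
    unfolding set_integrable_def by (rule integrable_const_bound[OF _ measurable])
qed

lemma positive_linear_functional_weighted_integral:
  fixes w :: "real^'n::finite \<Rightarrow> real"
  assumes M: "meas_on X M" and X: "compact X" and w: "continuous_on X w"
    and w_nonneg: "\<And>x. x \<in> X \<Longrightarrow> 0 \<le> w x"
  shows "positive_linear_functional X (\<lambda>h. LINT x:X|M. h x * w x)"
proof
  fix f g :: "real^'n \<Rightarrow> real" and c :: real
  assume f: "continuous_on X f"
  then have f_int: "set_integrable M X (\<lambda>x. f x * w x)"
    by (intro set_integrable_continuous_on[OF M X] continuous_on_mult w)
  show "(LINT x:X|M. c * f x * w x) = c * (LINT x:X|M. f x * w x)"
    by (simp add: mult.assoc)
  assume g: "continuous_on X g"
  then have g_int: "set_integrable M X (\<lambda>x. g x * w x)"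
    by (intro set_integrable_continuous_on[OF M X] continuous_on_mult w)
  show "(LINT x:X|M. (f x + g x) * w x) = (LINT x:X|M. f x * w x) + (LINT x:X|M. g x * w x)"
    using set_integral_add(2)[OF f_int g_int] by (simp add: distrib_right)
  assume "\<And>x. x \<in> X \<Longrightarrow> f x \<le> g x"
  then show "(LINT x:X|M. f x * w x) \<le> (LINT x:X|M. g x * w x)"
    by (intro set_integral_mono[OF f_int g_int] mult_right_mono w_nonneg)
qed

lemma meas_on_scaled_dirac:
  fixes x0 :: "real^'n::finite"
  assumes x0: "x0 \<in> X" and X: "X \<in> sets borel"
  shows "meas_on X (density (return borel x0) (\<lambda>_. ennreal c))"
  unfolding meas_on_def
proof (intro conjI)
  show "sets (density (return borel x0) (\<lambda>_. ennreal c)) = sets borel" by simp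
  show "finite_measure (density (return borel x0) (\<lambda>_. ennreal c))"
    by (intro finite_measureI) (simp add: emeasure_density nn_integral_return)
  have "UNIV - X \<in> sets (return borel x0)"
    using X by auto
  then show "emeasure (density (return borel x0) (\<lambda>_. ennreal c))
      (space (density (return borel x0) (\<lambda>_. ennreal c)) - X) = 0"
    using x0 by (simp add: emeasure_density nn_integral_return)
qed

lemma set_integral_scaled_dirac:
  fixes h :: "real^'n::finite \<Rightarrow> real"
  assumes x0: "x0 \<in> X" and X: "X \<in> sets borel" and c: "0 \<le> c" and h: "continuous_on X h"
  shows "(LINT x:X|density (return borel x0) (\<lambda>_. ennreal c). h x) = c * h x0"
proof -
  have "(\<lambda>x. indicator X x *\<^sub>R h x) \<in> borel_measurable (return borel x0)"
    using borel_measurable_continuous_on_indicator[OF X h] by simp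
  then show ?thesis
    unfolding set_lebesgue_integral_def using c x0
    by (simp add: integral_density integral_return)
qed

section \<open>The moment relaxation\<close>

definition moment_feasible ::
    "(real^'n::finite) set \<Rightarrow> (nat \<Rightarrow> real^'n \<Rightarrow> real) \<Rightarrow> nat \<Rightarrow> (nat \<Rightarrow> (real^'n) measure) \<Rightarrow> bool"
  where "moment_feasible X q t \<mu> \<longleftrightarrow>
    (\<forall>i\<in>{1..t}. meas_on X (\<mu> i))
  \<and> (\<forall>\<alpha>. \<forall>i\<in>{2..t}. (LINT x:X|\<mu> i. monomial \<alpha> x * q i x)
                       = (LINT x:X|\<mu> 1. monomial \<alpha> x * q 1 x))
  \<and> (LINT x:X|\<mu> 1. q 1 x) = 1"

lemma moment_feasible_objective_ge:
  assumes X: "compact X" and t: "1 \<le> t"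
    and p: "\<And>i. i \<in> {1..t} \<Longrightarrow> continuous_on X (p i)"
    and q: "\<And>i. i \<in> {1..t} \<Longrightarrow> continuous_on X (q i)"
    and q_pos: "\<And>i x. i \<in> {1..t} \<Longrightarrow> x \<in> X \<Longrightarrow> 0 < q i x"
    and feasible: "moment_feasible X q t \<mu>"
    and bound: "\<And>x. x \<in> X \<Longrightarrow> c \<le> (\<Sum>i=1..t. p i x / q i x)"
  shows "c \<le> (\<Sum>i=1..t. LINT x:X|\<mu> i. p i x)"
proof -
  define L where "L i = (\<lambda>h. LINT x:X|\<mu> i. h x * q i x)" for i
  have one: "1 \<in> {1..t}"
    using t by simp
  have L: "positive_linear_functional X (L i)" if "i \<in> {1..t}" for i
    unfolding L_def using feasible that q_pos
    by (intro positive_linear_functional_weighted_integral X q less_imp_le)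
      (auto simp: moment_feasible_def)
  have L_eq: "L i h = L 1 h" if i: "i \<in> {1..t}" and h: "continuous_on X h" for i h
  proof (cases "i = 1")
    case False
    then have "\<And>\<alpha>. L i (monomial \<alpha>) = L 1 (monomial \<alpha>)"
      using feasible i by (simp add: moment_feasible_def L_def)
    then show ?thesis
      by (rule positive_linear_functional_eq_of_moments[OF X L[OF i] L[OF one] _ h])
  qed simp
  have ratio: "continuous_on X (\<lambda>x. p i x / q i x)" if "i \<in> {1..t}" for i
    using p q q_pos that by (intro continuous_on_divide) (auto simp: less_le)
  have "c = L 1 (\<lambda>_. c)"
    using feasible positive_linear_functional.const[OF L[OF one], of c]
    by (simp add: moment_feasible_def L_def)
  also have "\<dots> \<le> L 1 (\<lambda>x. \<Sum>i=1..t. p i x / q i x)"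
    using bound ratio by (intro positive_linear_functional.mono[OF L[OF one]] continuous_on_sum) auto
  also have "\<dots> = (\<Sum>i=1..t. L 1 (\<lambda>x. p i x / q i x))"
    using ratio by (intro positive_linear_functional.sum[OF L[OF one]]) auto
  also have "\<dots> = (\<Sum>i=1..t. L i (\<lambda>x. p i x / q i x))"
    by (intro sum.cong refl L_eq[symmetric] ratio)
  also have "\<dots> = (\<Sum>i=1..t. LINT x:X|\<mu> i. p i x)"
  proof (intro sum.cong refl)
    fix i assume i: "i \<in> {1..t}"
    have "X \<in> sets (\<mu> i)"
      using feasible i X by (simp add: moment_feasible_def meas_on_def borel_compact)
    then show "L i (\<lambda>x. p i x / q i x) = (LINT x:X|\<mu> i. p i x)"
      unfolding L_def using q_pos[OF i] by (intro set_lebesgue_integral_cong) (auto simp: less_le)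
  qed
  finally show ?thesis .
qed

lemma scaled_diracs_moment_feasible:
  fixes x0 :: "real^'n::finite"
  assumes X: "X \<in> sets borel" and x0: "x0 \<in> X" and t: "1 \<le> t"
    and q: "\<And>i. i \<in> {1..t} \<Longrightarrow> continuous_on X (q i)"
    and q_pos: "\<And>i. i \<in> {1..t} \<Longrightarrow> 0 < q i x0"
  shows "moment_feasible X q t (\<lambda>i. density (return borel x0) (\<lambda>_. ennreal (1 / q i x0)))"
    (is "moment_feasible X q t ?\<mu>")
proof -
  have integral: "(LINT x:X|?\<mu> i. h x) = h x0 / q i x0" if "i \<in> {1..t}" "continuous_on X h" for i h
    using set_integral_scaled_dirac[OF x0 X _ that(2)] q_pos[OF that(1)] by simp
  have "(LINT x:X|?\<mu> i. monomial \<alpha> x * q i x) = monomial \<alpha> x0" if "i \<in> {1..t}" for i \<alpha>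
    using integral[OF that continuous_on_mult[OF monomial_continuous_on q[OF that]]] q_pos[OF that]
    by simp
  moreover have "meas_on X (?\<mu> i)" for i
    by (rule meas_on_scaled_dirac[OF x0 X])
  moreover have "(LINT x:X|?\<mu> 1. q 1 x) = 1"
    using integral[of 1 "q 1"] q[of 1] q_pos[of 1] t by simp
  ultimately show ?thesis
    unfolding moment_feasible_def by simp
qed

lemma moment_relaxation_Inf_eq_min:
  fixes x0 :: "real^'n::finite"
  assumes X: "compact X" and t: "1 \<le> t"
    and p: "\<And>i. i \<in> {1..t} \<Longrightarrow> continuous_on X (p i)"
    and q: "\<And>i. i \<in> {1..t} \<Longrightarrow> continuous_on X (q i)"
    and q_pos: "\<And>i x. i \<in> {1..t} \<Longrightarrow> x \<in> X \<Longrightarrow> 0 < q i x"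
    and x0: "x0 \<in> X"
    and min: "\<And>x. x \<in> X \<Longrightarrow> (\<Sum>i=1..t. p i x0 / q i x0) \<le> (\<Sum>i=1..t. p i x / q i x)"
  shows "Inf {(\<Sum>i=1..t. LINT x:X|\<mu> i. p i x) | \<mu>. moment_feasible X q t \<mu>}
    = (\<Sum>i=1..t. p i x0 / q i x0)"
proof (rule cInf_eq_minimum)
  let ?\<delta> = "\<lambda>i. density (return borel x0) (\<lambda>_. ennreal (1 / q i x0))"
  have "moment_feasible X q t ?\<delta>"
    using q_pos x0 by (intro scaled_diracs_moment_feasible borel_compact X x0 t q) auto
  moreover have "(\<Sum>i=1..t. p i x0 / q i x0) = (\<Sum>i=1..t. LINT x:X|?\<delta> i. p i x)"
    using p q_pos x0 by (simp add: set_integral_scaled_dirac[OF x0 borel_compact[OF X]] less_imp_le)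
  ultimately show "(\<Sum>i=1..t. p i x0 / q i x0)
      \<in> {(\<Sum>i=1..t. LINT x:X|\<mu> i. p i x) | \<mu>. moment_feasible X q t \<mu>}"
    by (intro CollectI exI[of _ ?\<delta>]) simp
  show "(\<Sum>i=1..t. p i x0 / q i x0) \<le> s"
    if "s \<in> {(\<Sum>i=1..t. LINT x:X|\<mu> i. p i x) | \<mu>. moment_feasible X q t \<mu>}" for s
    using that moment_feasible_objective_ge[OF X t p q q_pos _ min] by auto
qed

theorem theorem3p6:
  fixes g :: "nat \<Rightarrow> real^'n::finite \<Rightarrow> real" and m :: nat
    and p q :: "nat \<Rightarrow> real^'n \<Rightarrow> real" and t :: nat
    and X :: "(real^'n) set"
  assumes X_def: "X = {x. \<forall>j\<in>{1..m}. g j x \<ge> 0}"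
    and X_compact: "compact X"
    and g_poly: "\<forall>j\<in>{1..m}. is_poly (g j)"
    and t_pos: "t \<ge> 1"
    and p_poly: "\<forall>i\<in>{1..t}. is_poly (p i)"
    and q_poly: "\<forall>i\<in>{1..t}. is_poly (q i)"
    and q_pos: "\<forall>i\<in>{1..t}. \<forall>x\<in>X. q i x > 0"
  shows "Inf {(\<Sum>i=1..t. (LINT x:X|\<mu> i. p i x)) | \<mu>.
              (\<forall>i\<in>{1..t}. meas_on X (\<mu> i))
            \<and> (\<forall>\<alpha>. \<forall>i\<in>{2..t}. (LINT x:X|\<mu> i. monomial \<alpha> x * q i x)
                                 = (LINT x:X|\<mu> 1. monomial \<alpha> x * q 1 x))
            \<and> (LINT x:X|\<mu> 1. q 1 x) = 1}
       = Inf ((\<lambda>x. \<Sum>i=1..t. p i x / q i x) ` X)"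
    (is "_ = Inf (?F ` X)")
proof (cases "X = {}")
  case True
  \<comment> \<open>the normalisation \<open>\<integral>\<^sub>X q\<^sub>1 d\<mu>\<^sub>1 = 1\<close> is then unsatisfiable: both sides are \<open>Inf {}\<close>\<close>
  then show ?thesis
    by (simp add: set_lebesgue_integral_def)
next
  case False
  have p: "continuous_on X (p i)" and q: "continuous_on X (q i)" if "i \<in> {1..t}" for i
    using p_poly q_poly that by (simp_all add: is_poly_continuous_on)
  have q_pos': "0 < q i x" if "i \<in> {1..t}" "x \<in> X" for i x
    using q_pos that by blast
  have "continuous_on X ?F"
    using q_pos' by (intro continuous_on_sum continuous_on_divide p q) (auto simp: less_le)
  then obtain x0 where x0: "x0 \<in> X" and min: "\<And>x. x \<in> X \<Longrightarrow> ?F x0 \<le> ?F x"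
    using continuous_attains_inf[OF X_compact False] by blast
  have "Inf {(\<Sum>i=1..t. LINT x:X|\<mu> i. p i x) | \<mu>. moment_feasible X q t \<mu>} = ?F x0"
    using moment_relaxation_Inf_eq_min[OF X_compact t_pos p q q_pos' x0 min] by simp
  moreover have "Inf (?F ` X) = ?F x0"
    using x0 min by (intro cInf_eq_minimum) auto
  ultimately show ?thesis
    unfolding moment_feasible_def by simp
qed

end
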